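(* Let $d\in\{1,2,3\}$ and let $G$ be a graph with a nonedge $f=uv$. Suppose there is an induced minor model $\{B_x\}$ of a $d$-forbidden graph in $G\cup f$ such that $u\in B_a$, $v\in B_b$ with $a\ne b$ and $f$ is the only edge of $G\cup f$ joining $B_a$ and $B_b$. Then $(G,f)$ does not have the $d$-SIP.
   Context: A linkage $(G,\ell)$: finite simple graph $G$ and $\ell:E(G)\to\mathbb{R}_{\ge0}$ (squared lengths). A $d$-realization is $p:V(G)\to\mathbb{R}^d$ with $\|p(x)-p(y)\|^2=\ell(xy)$ for all $xy\in E(G)$; $\mathcal{C}^d(G,\ell)$ is the set of these. For a nonedge $f=uv$, $\Omega^d_f(G,\ell)=\{\|p(u)-p(v)\|^2:p\in\mathcal{C}^d(G,\ell)\}$; $(G,f)$ has the $d$-SIP if $\Omega^d_f(G,\ell)$ is convex (empty or a closed interval) for every $\ell$. $G\cup f$ adds $f$ as an edge. An induced minor model of $M$ in $H$ is a partition $\{B_x\}_{x\in V(M)}$ of $V(H)$ into nonempty sets each inducing a connected subgraph such that $xy\in E(M)$ iff some edge of $H$ joins $B_x$ and $B_y$. The $d$-forbidden graphs are $K_3$ for $d=1$, $K_4$ for $d=2$, and $K_5$ and $K_{2,2,2}$ for $d=3$. *)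

theory Defs
  imports "HOL-Analysis.Analysis"
begin

definition simple_graph :: "'a set \<Rightarrow> 'a set set \<Rightarrow> bool" where
  "simple_graph V E \<longleftrightarrow> finite V \<and>
     (\<forall>e\<in>E. \<exists>x y. x \<noteq> y \<and> x \<in> V \<and> y \<in> V \<and> e = {x, y})"

definition induces_connected :: "'a set set \<Rightarrow> 'a set \<Rightarrow> bool" where
  "induces_connected E S \<longleftrightarrow> S \<noteq> {} \<and>
     (\<forall>x\<in>S. \<forall>y\<in>S. (x, y) \<in> {(a, b). a \<in> S \<and> b \<in> S \<and> {a, b} \<in> E}\<^sup>*)"

definition induced_minor_model ::
  "'b set \<Rightarrow> 'b set set \<Rightarrow> 'a set \<Rightarrow> 'a set set \<Rightarrow> ('b \<Rightarrow> 'a set) \<Rightarrow> bool" where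
  "induced_minor_model VM EM VH EH B \<longleftrightarrow>
     (\<forall>x\<in>VM. B x \<noteq> {} \<and> induces_connected EH (B x)) \<and>
     (\<Union>x\<in>VM. B x) = VH \<and>
     (\<forall>x\<in>VM. \<forall>y\<in>VM. x \<noteq> y \<longrightarrow> B x \<inter> B y = {}) \<and>
     (\<forall>x\<in>VM. \<forall>y\<in>VM. x \<noteq> y \<longrightarrow>
        ({x, y} \<in> EM \<longleftrightarrow> (\<exists>p\<in>B x. \<exists>q\<in>B y. {p, q} \<in> EH)))"

text \<open>Realizations of the linkage (G, l) in the Euclidean space real^'n
  (d = CARD('n)); l gives squared lengths.\<close>
definition realizations :: "'n itself \<Rightarrow> 'a set set \<Rightarrow> ('a set \<Rightarrow> real) \<Rightarrow> ('a \<Rightarrow> real^'n::finite) set" where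
  "realizations _ E l = {p. \<forall>x y. {x, y} \<in> E \<longrightarrow> (norm (p x - p y))\<^sup>2 = l {x, y}}"

definition Omega :: "'n::finite itself \<Rightarrow> 'a set set \<Rightarrow> ('a set \<Rightarrow> real) \<Rightarrow> 'a \<Rightarrow> 'a \<Rightarrow> real set" where
  "Omega T E l u v = {(norm (p u - p v))\<^sup>2 | p. p \<in> realizations T E l}"

definition has_SIP :: "'n::finite itself \<Rightarrow> 'a set set \<Rightarrow> 'a \<Rightarrow> 'a \<Rightarrow> bool" where
  "has_SIP T E u v \<longleftrightarrow> (\<forall>l. (\<forall>e\<in>E. l e \<ge> 0) \<longrightarrow> convex (Omega T E l u v))"

definition complete_graph :: "nat \<Rightarrow> nat set \<times> nat set set" where
  "complete_graph n = ({0..<n}, {{i, j} | i j. i < n \<and> j < n \<and> i \<noteq> j})"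

text \<open>K_{2,2,2} with parts {0,1}, {2,3}, {4,5}.\<close>
definition K222 :: "nat set \<times> nat set set" where
  "K222 = ({0..<6}, {{i, j} | i j. i < 6 \<and> j < 6 \<and> i div 2 \<noteq> j div 2})"

definition forbidden_graph :: "nat \<Rightarrow> nat set \<Rightarrow> nat set set \<Rightarrow> bool" where
  "forbidden_graph d VM EM \<longleftrightarrow>
     (d = 1 \<and> (VM, EM) = complete_graph 3) \<or>
     (d = 2 \<and> (VM, EM) = complete_graph 4) \<or>
     (d = 3 \<and> ((VM, EM) = complete_graph 5 \<or> (VM, EM) = K222))"

end

theory Submission
  imports Defs
begin

(*
  Contract each branch set B x to the vertex x of M. Lengths on M - ab pull back to lengths on G
  (zero inside a branch set); conversely, a realization of the pulled-back lengths is constant on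
  the connected branch sets and, since uv is the only edge between B a and B b, it factors through
  a realization of M - ab. So both give the same set of squared uv- resp. ab-distances, and the
  d-SIP of (G, uv) would give the d-SIP of (M - ab, ab).

  For a forbidden graph M this fails. Place M - ab in R^d with a and b at one unit vector that is
  orthogonal to the images of all other vertices (a vertex at the origin and the others on the
  coordinate axes for K_(d+2), an octahedron for K_(2,2,2)). Reflecting b gives squared distance 4
  between a and b. In any realization, seen from a suitable vertex c, the remaining vertices form
  d - 1 orthonormal directions orthogonal to both a and b, so a and b coincide or are antipodal:
  the squared distance is 0 or 4, never 2.
*)

section \<open>Euclidean geometry\<close>

lemma power2_norm_diff_inner: "(norm (x - y))\<^sup>2 = x \<bullet> x + y \<bullet> y - 2 * (x \<bullet> y)"
  for x y :: "'a::real_inner"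
  by (simp add: power2_norm_eq_inner inner_diff_left inner_diff_right inner_commute)

lemma inner_diff_eq_if_sqdist_eq:
  fixes p q :: "'i \<Rightarrow> 'a::real_inner"
  assumes "(norm (p x - p c))\<^sup>2 = (norm (q x - q c))\<^sup>2"
    and "(norm (p y - p c))\<^sup>2 = (norm (q y - q c))\<^sup>2"
    and "(norm (p x - p y))\<^sup>2 = (norm (q x - q y))\<^sup>2"
  shows "(p x - p c) \<bullet> (p y - p c) = (q x - q c) \<bullet> (q y - q c)"
  using assms by (simp add: dot_norm_neg[of "p x - p c"] dot_norm_neg[of "q x - q c"])

lemma unit_orthogonal_to_orthonormal_codim_one:
  fixes S :: "'a::euclidean_space set" and U W :: 'a
  assumes "pairwise orthogonal S" and "\<forall>s\<in>S. norm s = 1" and "card S = DIM('a) - 1"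
    and "norm U = 1" and "norm W = 1" and "\<forall>s\<in>S. orthogonal U s" and "\<forall>s\<in>S. orthogonal W s"
  shows "W = U \<or> W = - U"
proof -
  define R where "R = W - (W \<bullet> U) *\<^sub>R U"
  have UU: "U \<bullet> U = 1" using assms(4) by (simp add: norm_eq_1)
  have "R = 0"
  proof (rule ccontr)
    assume "R \<noteq> 0"
    let ?T = "insert R (insert U S)"
    have "orthogonal R U" "\<forall>s\<in>S. orthogonal R s"
      using assms(6,7) UU by (auto simp: R_def orthogonal_def inner_diff_left)
    then have "pairwise orthogonal ?T"
      using assms(1,6) by (auto simp: pairwise_insert orthogonal_commute)
    moreover have "0 \<notin> ?T" using \<open>R \<noteq> 0\<close> assms(2,4) by auto
    ultimately have "independent ?T" by (rule pairwise_orthogonal_independent)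
    from independent_bound[OF this] have "finite ?T" "card ?T \<le> DIM('a)" by simp_all
    moreover have "U \<notin> S" using assms(6) UU by (auto simp: orthogonal_def)
    moreover have "R \<notin> insert U S"
      using \<open>orthogonal R U\<close> \<open>\<forall>s\<in>S. orthogonal R s\<close> \<open>R \<noteq> 0\<close> UU
      by (auto simp: orthogonal_def)
    ultimately have "card S + 2 \<le> DIM('a)" by simp
    then show False using assms(3) DIM_positive[where 'a='a] by linarith
  qed
  then have W: "W = (W \<bullet> U) *\<^sub>R U" by (simp add: R_def)
  have "norm W = \<bar>W \<bullet> U\<bar>" using arg_cong[OF W, of norm] assms(4) by simp
  then have "\<bar>W \<bullet> U\<bar> = 1" using assms(5) by simp
  then have "W \<bullet> U = 1 \<or> W \<bullet> U = -1" by linarith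
  then show ?thesis using W by auto
qed

lemma sqdist_unit_antipodal:
  assumes "norm U = 1" and "W = U \<or> W = - U"
  shows "(norm (U - W))\<^sup>2 \<in> {0, 4}"
proof -
  have "U - - U = 2 *\<^sub>R U" by (simp add: scaleR_2)
  then show ?thesis using assms by auto
qed

lemma sqdist_0_or_4_if_orthonormal_but_one_pair:
  fixes X :: "'i \<Rightarrow> 'a::euclidean_space"
  assumes "finite D" and "card D = DIM('a) + 1" and "a \<in> D" and "b \<in> D" and "a \<noteq> b"
    and orthonormal: "\<forall>x\<in>D. \<forall>y\<in>D. {x, y} \<noteq> {a, b} \<longrightarrow> X x \<bullet> X y = (if x = y then 1 else 0)"
  shows "(norm (X a - X b))\<^sup>2 \<in> {0, 4}"
proof -
  let ?R = "D - {a, b}"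
  have unit: "norm (X x) = 1" if "x \<in> D" for x
    using orthonormal that assms(5) by (auto simp: norm_eq_1 doubleton_eq_iff)
  have orth: "orthogonal (X x) (X y)" if "x \<in> D" "y \<in> ?R" "x \<noteq> y" for x y
    using orthonormal that by (auto simp: orthogonal_def doubleton_eq_iff)
  have "inj_on X ?R"
  proof (rule inj_onI, rule ccontr)
    fix x y assume "x \<in> ?R" "y \<in> ?R" "X x = X y" "x \<noteq> y"
    then have "X x \<bullet> X x = 0" using orth[of x y] by (simp add: orthogonal_def)
    then show False using unit[of x] \<open>x \<in> ?R\<close> by (simp add: norm_eq_1)
  qed
  then have "card (X ` ?R) = DIM('a) - 1"
    using assms(1-5) by (simp add: card_image card_Diff_subset)
  moreover have "pairwise orthogonal (X ` ?R)"
    using orth by (auto simp: pairwise_def)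
  ultimately have "X b = X a \<or> X b = - X a"
    using unit orth assms(3,4,5) by (intro unit_orthogonal_to_orthonormal_codim_one) auto
  then show ?thesis using unit[OF assms(3)] by (rule sqdist_unit_antipodal[rotated])
qed

lemma sqdist_0_or_4_if_congruent_to_frame:
  fixes p q :: "'i \<Rightarrow> 'a::euclidean_space"
  assumes "finite D" and "card D = DIM('a) + 1" and "a \<in> D" and "b \<in> D" and "a \<noteq> b"
    and "c \<notin> D" and "q c = 0"
    and frame: "\<forall>x\<in>D. \<forall>y\<in>D. {x, y} \<noteq> {a, b} \<longrightarrow> q x \<bullet> q y = (if x = y then 1 else 0)"
    and congruent: "\<forall>x\<in>insert c D. \<forall>y\<in>insert c D. {x, y} \<noteq> {a, b} \<longrightarrow>
      (norm (p x - p y))\<^sup>2 = (norm (q x - q y))\<^sup>2"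
  shows "(norm (p a - p b))\<^sup>2 \<in> {0, 4}"
proof -
  have "(norm ((p a - p c) - (p b - p c)))\<^sup>2 \<in> {0, 4}"
  proof (rule sqdist_0_or_4_if_orthonormal_but_one_pair[where X = "\<lambda>x. p x - p c" and D = D])
    show "\<forall>x\<in>D. \<forall>y\<in>D. {x, y} \<noteq> {a, b} \<longrightarrow>
        (p x - p c) \<bullet> (p y - p c) = (if x = y then 1 else 0)"
    proof (intro ballI impI)
      fix x y assume xy: "x \<in> D" "y \<in> D" "{x, y} \<noteq> {a, b}"
      then have "{x, c} \<noteq> {a, b}" "{y, c} \<noteq> {a, b}"
        using assms(3,4,6) by (auto simp: doubleton_eq_iff)
      then have "(p x - p c) \<bullet> (p y - p c) = (q x - q c) \<bullet> (q y - q c)"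
        using congruent xy by (intro inner_diff_eq_if_sqdist_eq) auto
      then show "(p x - p c) \<bullet> (p y - p c) = (if x = y then 1 else 0)"
        using frame xy \<open>q c = 0\<close> by simp
    qed
  qed (use assms in auto)
  then show ?thesis by simp
qed

lemma octahedron_minus_edge_sqdist:
  fixes xa xb xa' xb' xc xc' :: "'a::euclidean_space"
  assumes "DIM('a) = 3"
    and "(norm (xa - xc))\<^sup>2 = 1" "(norm (xb - xc))\<^sup>2 = 1" "(norm (xa' - xc))\<^sup>2 = 1" "(norm (xb' - xc))\<^sup>2 = 1"
    and "(norm (xc' - xa))\<^sup>2 = 2" "(norm (xc' - xb))\<^sup>2 = 2" "(norm (xc' - xa'))\<^sup>2 = 2" "(norm (xc' - xb'))\<^sup>2 = 2"
    and "(norm (xa - xb'))\<^sup>2 = 2" "(norm (xb - xa'))\<^sup>2 = 2" "(norm (xa' - xb'))\<^sup>2 = 4"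
  shows "(norm (xa - xb))\<^sup>2 \<in> {0, 4}"
proof -
  define U W X Y Z where "U = xa - xc" and "W = xb - xc" and "X = xa' - xc" and "Y = xb' - xc"
    and "Z = xc' - xc"
  have "(norm (Z - U))\<^sup>2 = 2" "(norm (Z - W))\<^sup>2 = 2" "(norm (Z - X))\<^sup>2 = 2" "(norm (Z - Y))\<^sup>2 = 2"
    "(norm (U - Y))\<^sup>2 = 2" "(norm (W - X))\<^sup>2 = 2" "(norm (X - Y))\<^sup>2 = 4"
    using assms(6-12) by (simp_all add: U_def W_def X_def Y_def Z_def)
  note sq = this[unfolded power2_norm_diff_inner]
  have UU: "U \<bullet> U = 1" and WW: "W \<bullet> W = 1" and XX: "X \<bullet> X = 1" and YY: "Y \<bullet> Y = 1"
    using assms(2-5) by (simp_all add: U_def W_def X_def Y_def power2_norm_eq_inner)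
  have "X \<bullet> Y = -1" using sq(7) XX YY by simp
  then have "(norm (X - - Y))\<^sup>2 = 0" using XX YY unfolding power2_norm_diff_inner by simp
  then have Y: "Y = - X" by (simp add: eq_neg_iff_add_eq_0 add.commute)
  \<comment> \<open>so xc is the midpoint of xa' and xb', which fixes its distance to xc'\<close>
  have "Z \<bullet> Z + X \<bullet> X - 2 * (Z \<bullet> X) = 2" "Z \<bullet> Z + X \<bullet> X + 2 * (Z \<bullet> X) = 2"
    using sq(3,4) unfolding Y by (simp_all add: inner_commute)
  then have ZZ: "Z \<bullet> Z = 1" and ZX: "Z \<bullet> X = 0" using XX by linarith+
  have UX: "U \<bullet> X = 0" and WX: "W \<bullet> X = 0" and ZU: "Z \<bullet> U = 0" and ZW: "Z \<bullet> W = 0"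
    using sq(1,2,5,6) UU WW XX ZZ unfolding Y by (simp_all add: inner_commute)
  have "W = U \<or> W = - U"
  proof (rule unit_orthogonal_to_orthonormal_codim_one[of "{X, Z}"])
    have "X \<noteq> Z" using ZX XX by auto
    then show "card {X, Z} = DIM('a) - 1" using assms(1) by simp
  qed (use UU WW XX ZZ ZX UX WX ZU ZW in \<open>auto simp: pairwise_insert orthogonal_def norm_eq_1 inner_commute\<close>)
  then have "(norm (U - W))\<^sup>2 \<in> {0, 4}" using UU by (intro sqdist_unit_antipodal) (simp_all add: norm_eq_1)
  then show ?thesis by (simp add: U_def W_def)
qed

section \<open>Placements and the SIP\<close>

lemma diameter_doubleton [simp]:
  fixes x y :: "'a::real_normed_vector"
  shows "diameter {x, y} = dist x y"
proof (rule antisym)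
  show "diameter {x, y} \<le> dist x y"
    by (rule diameter_le) (auto simp: dist_norm norm_minus_commute)
  show "dist x y \<le> diameter {x, y}"
    by (rule diameter_bounded_bound) auto
qed

(* The squared length of the edge e = {x, y} under p; being a square it is nonnegative for every
   set e, so it is an admissible length function for has_SIP. *)
definition sqdist_lengths :: "('a \<Rightarrow> 'b::real_normed_vector) \<Rightarrow> 'a set \<Rightarrow> real" where
  "sqdist_lengths p e = (diameter (p ` e))\<^sup>2"

lemma sqdist_lengths_doubleton [simp]: "sqdist_lengths p {x, y} = (norm (p x - p y))\<^sup>2"
  by (simp add: sqdist_lengths_def dist_norm)

lemma realization_sqdist_lengths: "p \<in> realizations T E (sqdist_lengths p)"
  by (simp add: realizations_def)

lemma reflect_vertex_realization:
  fixes q :: "'a \<Rightarrow> real^'n::finite"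
  assumes "\<forall>y. {b, y} \<in> F \<longrightarrow> orthogonal (q b) (q y)"
  shows "q(b := - q b) \<in> realizations T F (sqdist_lengths q)"
proof -
  have flip: "(norm (- q b - q y))\<^sup>2 = (norm (q b - q y))\<^sup>2" if "orthogonal (q b) (q y)" for y
    using that by (simp add: norm_uminus_minus power2_norm_eq_inner inner_add_left inner_add_right
        inner_diff_left inner_diff_right orthogonal_def inner_commute)
  show ?thesis
    unfolding realizations_def
    using assms flip by (auto simp: insert_commute norm_minus_commute)
qed

lemma not_has_SIP_if_sqdist_0_or_4:
  fixes q :: "'a \<Rightarrow> real^'n::finite"
  assumes "a \<noteq> b" and "q a = q b" and "norm (q b) = 1"
    and "\<forall>y. {b, y} \<in> F \<longrightarrow> orthogonal (q b) (q y)"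
    and "\<forall>p \<in> realizations TYPE('n) F (sqdist_lengths q). (norm (p a - p b))\<^sup>2 \<in> {0, 4}"
  shows "\<not> has_SIP TYPE('n) F a b"
proof
  let ?\<Omega> = "Omega TYPE('n) F (sqdist_lengths q) a b"
  assume "has_SIP TYPE('n) F a b"
  then have "convex ?\<Omega>" unfolding has_SIP_def by (simp add: sqdist_lengths_def)
  moreover have "0 \<in> ?\<Omega>"
    unfolding Omega_def using realization_sqdist_lengths[of q] assms(2) by (auto intro!: exI[of _ q])
  moreover have "4 \<in> ?\<Omega>"
  proof -
    have "q a + q b = 2 *\<^sub>R q b" using assms(2) by (simp add: scaleR_2)
    then have "(norm (q a + q b))\<^sup>2 = 4" using assms(3) by simp
    then show ?thesis
      unfolding Omega_def using reflect_vertex_realization[OF assms(4)] assms(1)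
      by (auto intro!: exI[of _ "q(b := - q b)"])
  qed
  ultimately have "(1/2) *\<^sub>R 0 + (1/2) *\<^sub>R 4 \<in> ?\<Omega>"
    by (intro convexD) auto
  then show False using assms(5) unfolding Omega_def by auto
qed

lemma simple_graph_edgeD:
  assumes "simple_graph V E" and "{s, t} \<in> E"
  shows "s \<in> V" and "t \<in> V" and "s \<noteq> t"
proof -
  obtain x y where "x \<noteq> y" "x \<in> V" "y \<in> V" "{s, t} = {x, y}"
    using assms unfolding simple_graph_def by blast
  then show "s \<in> V" "t \<in> V" "s \<noteq> t" by (auto simp: doubleton_eq_iff)
qed

lemma simple_graph_irreflexive_relation:
  fixes R :: "nat \<Rightarrow> nat \<Rightarrow> bool"
  assumes "\<And>i. \<not> R i i"
  shows "simple_graph {0..<m} {{i, j} | i j. i < m \<and> j < m \<and> R i j}"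
  unfolding simple_graph_def
proof (intro conjI ballI)
  fix e assume "e \<in> {{i, j} | i j. i < m \<and> j < m \<and> R i j}"
  then obtain i j where "e = {i, j}" "i < m" "j < m" "R i j" by blast
  moreover have "i \<noteq> j" using assms \<open>R i j\<close> by blast
  moreover have "i \<in> {0..<m}" "j \<in> {0..<m}" using \<open>i < m\<close> \<open>j < m\<close> by simp_all
  ultimately show "\<exists>x y. x \<noteq> y \<and> x \<in> {0..<m} \<and> y \<in> {0..<m} \<and> e = {x, y}" by blast
qed simp

lemma complete_graph_edge_iff:
  "{x, y} \<in> snd (complete_graph m) \<longleftrightarrow> x < m \<and> y < m \<and> x \<noteq> y"
  by (auto simp: complete_graph_def doubleton_eq_iff)

lemma K222_edge_iff: "{x, y} \<in> snd K222 \<longleftrightarrow> x < 6 \<and> y < 6 \<and> x div 2 \<noteq> y div 2"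
  by (auto simp: K222_def doubleton_eq_iff)

lemma K222_vertex_roles:
  fixes a b :: nat
  assumes "a < 6" and "b < 6" and "a div 2 \<noteq> b div 2"
  obtains a' b' c c' where "{a, a', b, b', c, c'} = {0..<6}" and "distinct [a, a', b, b', c, c']"
    and "a' div 2 = a div 2" and "b' div 2 = b div 2" and "c' div 2 = c div 2"
    and "distinct [a div 2, b div 2, c div 2]"
proof -
  define partner where "partner x = (if even x then x + 1 else x - 1)" for x :: nat
  define c where "c = 2 * (3 - a div 2 - b div 2)"
  have six: "{0..<6} = {0, 1, 2, 3, 4, 5 :: nat}" by auto
  have "a \<in> {0, 1, 2, 3, 4, 5}" "b \<in> {0, 1, 2, 3, 4, 5}" using assms(1,2) by auto
  then show ?thesis
    using that[of "partner a" "partner b" c "c + 1"] assms(3)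
    unfolding six partner_def c_def by (auto simp: insert_commute)
qed

lemma K222_minus_edge_octahedron:
  fixes a b :: nat
  defines "F \<equiv> snd K222 - {{a, b}}"
  assumes "{a, b} \<in> snd K222"
  obtains a' b' c c' where "distinct [a, a', b, b', c, c']"
    and "{a, c} \<in> F" "{b, c} \<in> F" "{a', c} \<in> F" "{b', c} \<in> F"
      "{c', a} \<in> F" "{c', b} \<in> F" "{c', a'} \<in> F" "{c', b'} \<in> F"
      "{a, b'} \<in> F" "{b, a'} \<in> F" "{a', b'} \<in> F"
    and "\<forall>y. {b, y} \<in> F \<longrightarrow> y \<in> {a', c, c'}"
proof -
  have "a < 6" "b < 6" "a div 2 \<noteq> b div 2" using assms(2) by (simp_all add: K222_edge_iff)
  then obtain a' b' c c' where cover: "{a, a', b, b', c, c'} = {0..<6}"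
    and dist: "distinct [a, a', b, b', c, c']"
    and parts: "a' div 2 = a div 2" "b' div 2 = b div 2" "c' div 2 = c div 2"
      "distinct [a div 2, b div 2, c div 2]"
    by (rule K222_vertex_roles)
  have "a' < 6" "b' < 6" "c < 6" "c' < 6" using cover by auto
  note facts = this \<open>a < 6\<close> \<open>b < 6\<close> dist[simplified] parts[simplified]
  have F: "{x, y} \<in> F \<longleftrightarrow> x < 6 \<and> y < 6 \<and> x div 2 \<noteq> y div 2 \<and> {x, y} \<noteq> {a, b}" for x y
    by (auto simp: F_def K222_edge_iff)
  have neighbours_b: "\<forall>y. {b, y} \<in> F \<longrightarrow> y \<in> {a', c, c'}"
  proof (intro allI impI)
    fix y assume "{b, y} \<in> F"
    then have "y \<in> {a, a', b, b', c, c'}" "y \<noteq> a" "y div 2 \<noteq> b div 2"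
      unfolding cover by (auto simp: F doubleton_eq_iff)
    then show "y \<in> {a', c, c'}" using facts by auto
  qed
  have "{a, c} \<in> F" "{b, c} \<in> F" "{a', c} \<in> F" "{b', c} \<in> F"
    "{c', a} \<in> F" "{c', b} \<in> F" "{c', a'} \<in> F" "{c', b'} \<in> F"
    "{a, b'} \<in> F" "{b, a'} \<in> F" "{a', b'} \<in> F"
    using facts by (auto simp: F doubleton_eq_iff)
  then show ?thesis using that[OF dist] neighbours_b by blast
qed

section \<open>Contracting the branch sets\<close>

locale minor_model_on_nonedge =
  fixes V :: "'a set" and E :: "'a set set" and u v :: 'a
    and VM :: "'b set" and EM :: "'b set set" and B :: "'b \<Rightarrow> 'a set" and a b :: 'b
  assumes graph: "simple_graph V E" and nonedge: "{u, v} \<notin> E"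
    and minor_graph: "simple_graph VM EM"
    and model: "induced_minor_model VM EM V (insert {u, v} E) B"
    and a: "a \<in> VM" and b: "b \<in> VM" and ab: "a \<noteq> b" and u: "u \<in> B a" and v: "v \<in> B b"
    and only_edge: "\<forall>x\<in>B a. \<forall>y\<in>B b. {x, y} \<in> insert {u, v} E \<longrightarrow> {x, y} = {u, v}"
begin

lemma block_connected: "x \<in> VM \<Longrightarrow> induces_connected (insert {u, v} E) (B x)"
  using model unfolding induced_minor_model_def by simp

lemma blocks_cover: "(\<Union>x\<in>VM. B x) = V"
  using model unfolding induced_minor_model_def by simp

lemma blocks_disjoint:
  assumes "x \<in> VM" and "y \<in> VM" and "s \<in> B x" and "s \<in> B y"
  shows "x = y"
proof (rule ccontr)
  assume "x \<noteq> y"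
  then have "B x \<inter> B y = {}"
    using model assms(1,2) unfolding induced_minor_model_def by simp
  then show False using assms(3,4) by blast
qed

lemma edge_iff_blocks_adjacent:
  "x \<in> VM \<Longrightarrow> y \<in> VM \<Longrightarrow> x \<noteq> y \<Longrightarrow>
    {x, y} \<in> EM \<longleftrightarrow> (\<exists>s\<in>B x. \<exists>t\<in>B y. {s, t} \<in> insert {u, v} E)"
  using model unfolding induced_minor_model_def by simp

definition block :: "'a \<Rightarrow> 'b" where
  "block s = (SOME x. x \<in> VM \<and> s \<in> B x)"

lemma block_eq: "x \<in> VM \<Longrightarrow> s \<in> B x \<Longrightarrow> block s = x"
  unfolding block_def by (rule some_equality) (simp, metis blocks_disjoint)

lemma block_mem: "s \<in> V \<Longrightarrow> block s \<in> VM \<and> s \<in> B (block s)"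
proof -
  assume "s \<in> V"
  then obtain x where "x \<in> VM" "s \<in> B x" using blocks_cover by blast
  then show ?thesis using block_eq by metis
qed

lemma block_u [simp]: "block u = a" and block_v [simp]: "block v = b"
  by (rule block_eq[OF a u], rule block_eq[OF b v])

lemma uv_not_within_block:
  assumes "x \<in> VM" and "s \<in> B x" and "t \<in> B x"
  shows "{s, t} \<noteq> {u, v}"
proof
  assume "{s, t} = {u, v}"
  then have "u \<in> B x" "v \<in> B x" using assms(2,3) by auto
  then have "x = a" "x = b"
    using blocks_disjoint[OF assms(1) a _ u] blocks_disjoint[OF assms(1) b _ v] by auto
  then show False using ab by simp
qed

lemma edge_between_blocks:
  assumes "{s, t} \<in> E" and "block s \<noteq> block t"
  shows "{block s, block t} \<in> EM - {{a, b}}"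
proof -
  have "s \<in> V" "t \<in> V" using simple_graph_edgeD[OF graph assms(1)] by auto
  then have "block s \<in> VM" "s \<in> B (block s)" "block t \<in> VM" "t \<in> B (block t)"
    using block_mem by auto
  then have "{block s, block t} \<in> EM"
    using edge_iff_blocks_adjacent assms by blast
  moreover have "{block s, block t} \<noteq> {a, b}"
  proof
    assume "{block s, block t} = {a, b}"
    then consider "s \<in> B a" "t \<in> B b" | "t \<in> B a" "s \<in> B b"
      using \<open>s \<in> B (block s)\<close> \<open>t \<in> B (block t)\<close> by (auto simp: doubleton_eq_iff)
    then have "{s, t} = {u, v}"
      using only_edge assms(1) by cases (auto simp: insert_commute)
    then show False using assms(1) nonedge by simp
  qed
  ultimately show ?thesis by simp
qed

lemma contracted_edge_lifts:
  assumes "{x, y} \<in> EM - {{a, b}}"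
  obtains s t where "x \<in> VM" "y \<in> VM" "s \<in> B x" "t \<in> B y" "{s, t} \<in> E"
proof -
  have "x \<in> VM" "y \<in> VM" "x \<noteq> y" using simple_graph_edgeD[OF minor_graph] assms by auto
  then obtain s t where st: "s \<in> B x" "t \<in> B y" "{s, t} \<in> insert {u, v} E"
    using edge_iff_blocks_adjacent assms by blast
  have "{s, t} \<noteq> {u, v}"
  proof
    assume "{s, t} = {u, v}"
    then consider "u \<in> B x" "v \<in> B y" | "v \<in> B x" "u \<in> B y"
      using st by (auto simp: doubleton_eq_iff)
    then have "{x, y} = {a, b}"
      using blocks_disjoint[OF \<open>x \<in> VM\<close>] blocks_disjoint[OF \<open>y \<in> VM\<close>] a b u v
      by cases (metis, metis insert_commute)
    then show False using assms by simp
  qed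
  then show ?thesis using that \<open>x \<in> VM\<close> \<open>y \<in> VM\<close> st by auto
qed

(* block ` e has two elements exactly when e joins two different branch sets. *)
definition pullback_lengths :: "('b set \<Rightarrow> real) \<Rightarrow> 'a set \<Rightarrow> real" where
  "pullback_lengths l e = (if card (block ` e) = 2 then l (block ` e) else 0)"

lemma pullback_lengths_doubleton:
  "pullback_lengths l {s, t} = (if block s = block t then 0 else l {block s, block t})"
  by (simp add: pullback_lengths_def card_insert_if)

lemma realization_pullback:
  assumes "q \<in> realizations T (EM - {{a, b}}) l"
  shows "q \<circ> block \<in> realizations T E (pullback_lengths l)"
  unfolding realizations_def
proof (intro CollectI allI impI)
  fix s t assume st: "{s, t} \<in> E"
  show "(norm ((q \<circ> block) s - (q \<circ> block) t))\<^sup>2 = pullback_lengths l {s, t}"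
  proof (cases "block s = block t")
    case False
    then have "{block s, block t} \<in> EM - {{a, b}}" by (rule edge_between_blocks[OF st])
    then show ?thesis using assms False by (simp add: pullback_lengths_doubleton realizations_def)
  qed (simp add: pullback_lengths_doubleton)
qed

lemma realization_constant_on_block:
  assumes p: "p \<in> realizations T E (pullback_lengths l)" and x: "x \<in> VM"
    and "s \<in> B x" and "t \<in> B x"
  shows "p s = p t"
proof -
  have "(s, t) \<in> {(c, d). c \<in> B x \<and> d \<in> B x \<and> {c, d} \<in> insert {u, v} E}\<^sup>*"
    using block_connected[OF x] assms(3,4) unfolding induces_connected_def by blast
  then show ?thesis
  proof (induction rule: rtrancl_induct)
    case base
    show ?case by simp
  next
    case (step c d)
    then have "c \<in> B x" "d \<in> B x" "{c, d} \<in> insert {u, v} E" by auto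
    then have "{c, d} \<in> E" using uv_not_within_block[OF x] by auto
    then have "(norm (p c - p d))\<^sup>2 = 0"
      using p block_eq[OF x \<open>c \<in> B x\<close>] block_eq[OF x \<open>d \<in> B x\<close>]
      by (simp add: realizations_def pullback_lengths_doubleton)
    then show ?case using step.IH by simp
  qed
qed

lemma realization_descends:
  assumes p: "p \<in> realizations T E (pullback_lengths l)"
  obtains q where "q \<in> realizations T (EM - {{a, b}}) l" and "q a = p u" and "q b = p v"
proof
  define q where "q x = p (SOME s. s \<in> B x)" for x
  have q: "q x = p s" if "x \<in> VM" "s \<in> B x" for x s
  proof -
    have "(SOME s. s \<in> B x) \<in> B x" using that(2) by (rule someI)
    then show ?thesis unfolding q_def using realization_constant_on_block[OF p that(1)] that(2) by blast
  qed
  show "q a = p u" "q b = p v" using q a b u v by auto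
  show "q \<in> realizations T (EM - {{a, b}}) l"
    unfolding realizations_def
  proof (intro CollectI allI impI)
    fix x y assume xy: "{x, y} \<in> EM - {{a, b}}"
    then obtain s t where st: "x \<in> VM" "y \<in> VM" "s \<in> B x" "t \<in> B y" "{s, t} \<in> E"
      by (rule contracted_edge_lifts)
    have "x \<noteq> y" using simple_graph_edgeD(3)[OF minor_graph] xy by blast
    have "(norm (p s - p t))\<^sup>2 = pullback_lengths l {s, t}"
      using p st(5) by (simp add: realizations_def)
    also have "\<dots> = l {x, y}"
      using block_eq[OF st(1,3)] block_eq[OF st(2,4)] \<open>x \<noteq> y\<close> by (simp add: pullback_lengths_doubleton)
    finally show "(norm (q x - q y))\<^sup>2 = l {x, y}" using q[OF st(1,3)] q[OF st(2,4)] by simp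
  qed
qed

lemma Omega_pullback_lengths:
  "Omega T E (pullback_lengths l) u v = Omega T (EM - {{a, b}}) l a b"
proof (intro set_eqI iffI)
  fix r assume "r \<in> Omega T E (pullback_lengths l) u v"
  then obtain p where "p \<in> realizations T E (pullback_lengths l)" "r = (norm (p u - p v))\<^sup>2"
    unfolding Omega_def by blast
  moreover obtain q where "q \<in> realizations T (EM - {{a, b}}) l" "q a = p u" "q b = p v"
    using realization_descends[OF \<open>p \<in> _\<close>] .
  ultimately show "r \<in> Omega T (EM - {{a, b}}) l a b"
    unfolding Omega_def by (auto intro!: exI[of _ q])
next
  fix r assume "r \<in> Omega T (EM - {{a, b}}) l a b"
  then obtain q where "q \<in> realizations T (EM - {{a, b}}) l" "r = (norm (q a - q b))\<^sup>2"
    unfolding Omega_def by blast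
  then show "r \<in> Omega T E (pullback_lengths l) u v"
    unfolding Omega_def using realization_pullback by (auto intro!: exI[of _ "q \<circ> block"])
qed

lemma has_SIP_contract:
  assumes "has_SIP T E u v"
  shows "has_SIP T (EM - {{a, b}}) a b"
  unfolding has_SIP_def
proof (intro allI impI)
  fix l :: "'b set \<Rightarrow> real" assume l: "\<forall>e\<in>EM - {{a, b}}. 0 \<le> l e"
  have "\<forall>e\<in>E. 0 \<le> pullback_lengths l e"
  proof
    fix e assume "e \<in> E"
    moreover obtain s t where "e = {s, t}" using graph \<open>e \<in> E\<close> unfolding simple_graph_def by blast
    ultimately show "0 \<le> pullback_lengths l e"
      using l edge_between_blocks[of s t] by (simp add: pullback_lengths_doubleton)
  qed
  then show "convex (Omega T (EM - {{a, b}}) l a b)"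
    using assms unfolding has_SIP_def Omega_pullback_lengths[symmetric] by blast
qed

end

section \<open>The forbidden graphs minus an edge\<close>

lemma frame_placement_identifying_pair:
  fixes a b :: nat
  assumes a: "a < CARD('n::finite) + 2" and b: "b < CARD('n) + 2" and "a \<noteq> b"
  obtains c and q :: "nat \<Rightarrow> real^'n"
  where "c < CARD('n) + 2" "c \<noteq> a" "c \<noteq> b" "q c = 0" "q a = q b"
    and "\<forall>x \<in> {0..<CARD('n) + 2} - {c}. \<forall>y \<in> {0..<CARD('n) + 2} - {c}.
      {x, y} \<noteq> {a, b} \<longrightarrow> q x \<bullet> q y = (if x = y then 1 else 0)"
proof -
  let ?m = "CARD('n) + 2"
  have "card ({0..<?m} - {a, b}) = CARD('n)"
    using a b \<open>a \<noteq> b\<close> by (simp add: card_Diff_subset)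
  then obtain c where c: "c < ?m" "c \<noteq> a" "c \<noteq> b"
    by (metis (no_types, lifting) DiffE atLeastLessThan_iff card.empty ex_in_conv
        insertCI zero_less_card_finite less_irrefl)
  define D where "D = {0..<?m} - {c}"
  have "finite (D - {b})" and "card (D - {b}) = CARD('n)"
    using b c by (auto simp: D_def card_Diff_subset)
  then obtain \<tau> :: "nat \<Rightarrow> 'n" where \<tau>: "bij_betw \<tau> (D - {b}) UNIV"
    using finite_same_card_bij[of "D - {b}" "UNIV :: 'n set"] by auto
  define \<iota> where "\<iota> x = (if x = b then a else x)" for x
  define q where "q x = (if x = c then 0 else axis (\<tau> (\<iota> x)) (1::real))" for x
  have \<iota>: "x \<in> D \<Longrightarrow> \<iota> x \<in> D - {b}" for x using a c(2) \<open>a \<noteq> b\<close> by (auto simp: \<iota>_def D_def)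
  have "q x \<bullet> q y = (if x = y then 1 else 0)" if "x \<in> D" "y \<in> D" "{x, y} \<noteq> {a, b}" for x y
  proof -
    have "\<tau> (\<iota> x) = \<tau> (\<iota> y) \<longleftrightarrow> \<iota> x = \<iota> y"
      using inj_on_eq_iff[OF bij_betw_imp_inj_on[OF \<tau>] \<iota> \<iota>] that(1,2) .
    also have "\<dots> \<longleftrightarrow> x = y" using that(3) by (auto simp: \<iota>_def)
    finally show ?thesis using that(1,2) by (simp add: q_def D_def inner_axis_axis)
  qed
  moreover have "q c = 0" "q a = q b" using c by (simp_all add: q_def \<iota>_def)
  ultimately show ?thesis using that c unfolding D_def by blast
qed

lemma not_has_SIP_complete_graph_minus_edge:
  fixes a b :: nat
  defines "F \<equiv> snd (complete_graph (CARD('n::finite) + 2)) - {{a, b}}"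
  assumes a: "a < CARD('n) + 2" and b: "b < CARD('n) + 2" and "a \<noteq> b"
  shows "\<not> has_SIP TYPE('n) F a b"
proof -
  let ?m = "CARD('n) + 2"
  obtain c and q :: "nat \<Rightarrow> real^'n"
    where c: "c < ?m" "c \<noteq> a" "c \<noteq> b" and q: "q c = 0" "q a = q b"
      and frame: "\<forall>x \<in> {0..<?m} - {c}. \<forall>y \<in> {0..<?m} - {c}.
        {x, y} \<noteq> {a, b} \<longrightarrow> q x \<bullet> q y = (if x = y then 1 else 0)"
    using frame_placement_identifying_pair[OF a b \<open>a \<noteq> b\<close>] by blast
  have F: "{x, y} \<in> F \<longleftrightarrow> x < ?m \<and> y < ?m \<and> x \<noteq> y \<and> {x, y} \<noteq> {a, b}" for x y
    by (auto simp: F_def complete_graph_edge_iff)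
  show ?thesis
  proof (rule not_has_SIP_if_sqdist_0_or_4)
    show "a \<noteq> b" "q a = q b" by fact+
    show "norm (q b) = 1" using frame a b c \<open>a \<noteq> b\<close> by (auto simp: norm_eq_1 doubleton_eq_iff)
    show "\<forall>y. {b, y} \<in> F \<longrightarrow> orthogonal (q b) (q y)"
    proof (intro allI impI)
      fix y assume "{b, y} \<in> F"
      then have "y \<noteq> a" "y \<noteq> b" "y < ?m" by (auto simp: F doubleton_eq_iff)
      then show "orthogonal (q b) (q y)"
        using frame b c q(1) by (cases "y = c") (auto simp: orthogonal_def doubleton_eq_iff)
    qed
    show "\<forall>p \<in> realizations TYPE('n) F (sqdist_lengths q). (norm (p a - p b))\<^sup>2 \<in> {0, 4}"
    proof
      fix p assume p: "p \<in> realizations TYPE('n) F (sqdist_lengths q)"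
      have "(norm (p x - p y))\<^sup>2 = (norm (q x - q y))\<^sup>2"
        if "x < ?m" "y < ?m" "{x, y} \<noteq> {a, b}" for x y
        using p that by (cases "x = y") (auto simp: realizations_def F)
      moreover have "insert c ({0..<?m} - {c}) = {0..<?m}" using c(1) by auto
      ultimately show "(norm (p a - p b))\<^sup>2 \<in> {0, 4}"
        using a b c q(1) frame \<open>a \<noteq> b\<close>
        by (intro sqdist_0_or_4_if_congruent_to_frame[where D = "{0..<?m} - {c}" and c = c]) auto
    qed
  qed
qed

lemma not_has_SIP_K222_minus_edge:
  fixes a b :: nat
  defines "F \<equiv> snd K222 - {{a, b}}"
  assumes "CARD('n::finite) = 3" and "{a, b} \<in> snd K222"
  shows "\<not> has_SIP TYPE('n) F a b"
proof -
  obtain a' b' c c' where dist: "distinct [a, a', b, b', c, c']"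
    and edges: "{a, c} \<in> F" "{b, c} \<in> F" "{a', c} \<in> F" "{b', c} \<in> F"
      "{c', a} \<in> F" "{c', b} \<in> F" "{c', a'} \<in> F" "{c', b'} \<in> F"
      "{a, b'} \<in> F" "{b, a'} \<in> F" "{a', b'} \<in> F"
    and neighbours_b: "\<forall>y. {b, y} \<in> F \<longrightarrow> y \<in> {a', c, c'}"
    by (rule K222_minus_edge_octahedron[OF assms(3), folded F_def])
  obtain i j k :: 'n where ijk: "i \<noteq> j" "j \<noteq> k" "i \<noteq> k"
    using assms(2) card_3_iff[of "UNIV :: 'n set"] by auto
  define e where "e i = axis i (1::real)" for i :: 'n
  define q where "q x = (if x = a \<or> x = b then e k else if x = a' then - e i else if x = b' then e i
    else if x = c' then e j else 0)" for x
  have q: "q a = e k" "q b = e k" "q a' = - e i" "q b' = e i" "q c' = e j" "q c = 0"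
    using dist by (auto simp: q_def)
  have e_inner [simp]: "e i \<bullet> e j = (if i = j then 1 else 0)" for i j
    by (simp add: e_def inner_axis_axis)
  show ?thesis
  proof (rule not_has_SIP_if_sqdist_0_or_4)
    show "a \<noteq> b" "q a = q b" "norm (q b) = 1" using dist q by (simp_all add: e_def)
    show "\<forall>y. {b, y} \<in> F \<longrightarrow> orthogonal (q b) (q y)"
      using neighbours_b q ijk by (auto simp: orthogonal_def)
    show "\<forall>p \<in> realizations TYPE('n) F (sqdist_lengths q). (norm (p a - p b))\<^sup>2 \<in> {0, 4}"
    proof
      fix p assume p: "p \<in> realizations TYPE('n) F (sqdist_lengths q)"
      have congruent: "(norm (p x - p y))\<^sup>2 = (norm (q x - q y))\<^sup>2" if "{x, y} \<in> F" for x y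
        using p that by (simp add: realizations_def)
      have "(norm (q a - q c))\<^sup>2 = 1" "(norm (q b - q c))\<^sup>2 = 1" "(norm (q a' - q c))\<^sup>2 = 1"
        "(norm (q b' - q c))\<^sup>2 = 1" "(norm (q c' - q a))\<^sup>2 = 2" "(norm (q c' - q b))\<^sup>2 = 2"
        "(norm (q c' - q a'))\<^sup>2 = 2" "(norm (q c' - q b'))\<^sup>2 = 2" "(norm (q a - q b'))\<^sup>2 = 2"
        "(norm (q b - q a'))\<^sup>2 = 2" "(norm (q a' - q b'))\<^sup>2 = 4"
        using ijk unfolding q power2_norm_diff_inner by simp_all
      then show "(norm (p a - p b))\<^sup>2 \<in> {0, 4}"
        by (intro octahedron_minus_edge_sqdist[where xc = "p c" and xa' = "p a'" and xb' = "p b'"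
            and xc' = "p c'"]) (simp_all add: assms(2) edges[THEN congruent])
    qed
  qed
qed

lemma forbidden_graph_cases:
  assumes "forbidden_graph CARD('n::finite) VM EM"
  obtains "(VM, EM) = complete_graph (CARD('n) + 2)" | "CARD('n) = 3" and "(VM, EM) = K222"
  using assms unfolding forbidden_graph_def by (auto simp: eval_nat_numeral)

lemma simple_graph_forbidden_graph:
  assumes "forbidden_graph CARD('n::finite) VM EM"
  shows "simple_graph VM EM"
  using assms
  by (cases rule: forbidden_graph_cases)
    (auto simp: complete_graph_def K222_def intro: simple_graph_irreflexive_relation)

lemma not_has_SIP_forbidden_graph_minus_edge:
  assumes "forbidden_graph CARD('n::finite) VM EM" and "{a, b} \<in> EM"
  shows "\<not> has_SIP TYPE('n) (EM - {{a, b}}) a b"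
  using assms(1)
proof (cases rule: forbidden_graph_cases)
  case 1
  then have "EM = snd (complete_graph (CARD('n) + 2))" by (metis snd_conv)
  then show ?thesis
    using assms(2) not_has_SIP_complete_graph_minus_edge by (auto simp: complete_graph_edge_iff)
next
  case 2
  then have "EM = snd K222" by (metis snd_conv)
  then show ?thesis using not_has_SIP_K222_minus_edge[OF 2(1)] assms(2) by simp
qed

theorem mainTheorem10:
  fixes V :: "'a set" and E :: "'a set set" and u v :: 'a
    and VM :: "nat set" and EM :: "nat set set" and B :: "nat \<Rightarrow> 'a set" and a b :: nat
  assumes "CARD('n::finite) \<in> {1, 2, 3}"
    and "simple_graph V E"
    and "u \<in> V" and "v \<in> V" and "u \<noteq> v" and "{u, v} \<notin> E"
    and "forbidden_graph CARD('n) VM EM"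
    and "induced_minor_model VM EM V (insert {u, v} E) B"
    and "a \<in> VM" and "b \<in> VM" and "a \<noteq> b" and "u \<in> B a" and "v \<in> B b"
    and "\<forall>x\<in>B a. \<forall>y\<in>B b. {x, y} \<in> insert {u, v} E \<longrightarrow> {x, y} = {u, v}"
  shows "\<not> has_SIP TYPE('n) E u v"
proof
  assume "has_SIP TYPE('n) E u v"
  interpret minor_model_on_nonedge V E u v VM EM B a b
    using assms simple_graph_forbidden_graph[OF assms(7)] by unfold_locales
  have "{a, b} \<in> EM" using edge_iff_blocks_adjacent a b ab u v by blast
  have "has_SIP TYPE('n) (EM - {{a, b}}) a b"
    by (rule has_SIP_contract) fact
  then show False using not_has_SIP_forbidden_graph_minus_edge[OF assms(7) \<open>{a, b} \<in> EM\<close>] by blast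
qed

end
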